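(* (1) If $n,m\in\mathbf N$ with $1\le m\le n$, then $$\left\langle{n\atop m}\right\rangle=\sum_{j=1}^{n-m}j\left\langle{n-j-1\atop m-1}\right\rangle^{(j+1,1)} .$$ (2) If $n,m,\nu\in\mathbf N_0$ with $0\le m\le n$ and $1\le\nu\le n-1$, then $$\left\langle{n\atop m}\right\rangle=\sum_{k=0}^{\nu}\left\langle{\nu\atop k}\right\rangle\left\langle{n-\nu\atop m-k}\right\rangle^{(\nu,k)} .$$
   Context: Euler numbers: $\left\langle{0\atop 0}\right\rangle=1$, $\left\langle{n\atop k}\right\rangle=0$ for $k<0$ or $k>n$, $\left\langle{n\atop k}\right\rangle=(n-k)\left\langle{n-1\atop k-1}\right\rangle+(k+1)\left\langle{n-1\atop k}\right\rangle$. For sequences $a=(a_j)_{j\ge1}$, $b=(b_j)_{j\ge0}$ and $\omega=(\varepsilon_1,\dots,\varepsilon_N)\in\{0,1\}^N$ let $w^{a,b}_N(\omega)=\prod_{t=1}^N g_t$ where, with $j=\#\{l<t:\varepsilon_l=0\}$, $g_t=a_{t-j}$ if $\varepsilon_t=0$ and $g_t=b_j$ if $\varepsilon_t=1$; let $\zeta_{Nk}(a,b)=\sum w^{a,b}_N(\omega)$ over $\omega$ with exactly $k$ zeros ($N\ge1$, $0\le k\le N$), $\zeta_{00}=1$, $\zeta_{Nk}=0$ if $k<0$ or $k>N$. For integers $0\le\mu\le\nu$, the associated Euler numbers of rank $(\nu,\mu)$ are $\left\langle{N\atop k}\right\rangle^{(\nu,\mu)}=\zeta_{Nk}(a,b)$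 with $a_j=\nu-\mu+j-1$ $(j\ge1)$ and $b_j=\mu+j+1$ $(j\ge0)$. *)

theory Defs
  imports Main
begin

fun eulerian :: "nat \<Rightarrow> int \<Rightarrow> nat" where
  "eulerian 0 k = (if k = 0 then 1 else 0)"
| "eulerian (Suc n) k =
     (if k < 0 \<or> k > int (Suc n) then 0
      else nat (int (Suc n) - k) * eulerian n (k - 1) + nat (k + 1) * eulerian n k)"

text \<open>Weight of a 0/1 word (False = 0, True = 1), read left to right.
  t is the (1-based) position of the next letter, j the number of zeros seen so far.\<close>
fun wt_aux :: "(nat \<Rightarrow> nat) \<Rightarrow> (nat \<Rightarrow> nat) \<Rightarrow> nat \<Rightarrow> nat \<Rightarrow> bool list \<Rightarrow> nat" where
  "wt_aux a b t j [] = 1"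
| "wt_aux a b t j (e # es) =
     (if e then b j * wt_aux a b (Suc t) j es
      else a (t - j) * wt_aux a b (Suc t) (Suc j) es)"

definition wt :: "(nat \<Rightarrow> nat) \<Rightarrow> (nat \<Rightarrow> nat) \<Rightarrow> bool list \<Rightarrow> nat" where
  "wt a b w = wt_aux a b 1 0 w"

definition zeta :: "(nat \<Rightarrow> nat) \<Rightarrow> (nat \<Rightarrow> nat) \<Rightarrow> nat \<Rightarrow> int \<Rightarrow> nat" where
  "zeta a b N k =
     (if k < 0 \<or> k > int N then 0
      else \<Sum>w \<in> {w. length w = N \<and> int (length (filter Not w)) = k}. wt a b w)"

definition assoc_eulerian :: "nat \<Rightarrow> nat \<Rightarrow> nat \<Rightarrow> int \<Rightarrow> nat" where
  "assoc_eulerian \<nu> \<mu> N k =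
     zeta (\<lambda>j. \<nu> - \<mu> + j - 1) (\<lambda>j. \<mu> + j + 1) N k"

end

(*
  Both sides obey the same recurrence.  Reading off the last letter of a word shows that the
  associated Euler numbers F of rank (nu, mu) satisfy
    F (N + 1) i = (mu + i + 1) * F N i + (nu - mu + N + 1 - i) * F N (i - 1);
  for mu = k at index i - k these are exactly the coefficients of the Euler recurrence for
  <nu + N + 1, i>, so (2) follows by induction on N.  For nu = 1 the sum in (2) collapses to
  the numbers of rank (1, 0); splitting each word at its first zero, which has weight j when it
  sits at position j, leaves a word weighted with rank (j + 1, 1), and this gives (1).
*)

theory Submission
  imports Defs
begin

definition words :: "nat \<Rightarrow> int \<Rightarrow> bool list set" where
  "words N i = {w. length w = N \<and> int (length (filter Not w)) = i}"

lemma finite_words: "finite (words N i)"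
proof (rule finite_subset)
  show "words N i \<subseteq> {w. set w \<subseteq> UNIV \<and> length w = N}"
    by (auto simp: words_def)
qed (rule finite_lists_length_eq, simp)

lemma zeta_eq_sum_words: "zeta a b N i = (\<Sum>w \<in> words N i. wt a b w)"
proof (cases "i < 0 \<or> i > int N")
  case True
  then have "words N i = {}"
    by (auto simp: words_def) (meson length_filter_le not_le)
  with True show ?thesis
    by (simp add: zeta_def)
qed (simp add: zeta_def words_def)

lemma zeta_eq_0: "i < 0 \<or> i > int N \<Longrightarrow> zeta a b N i = 0"
  by (simp add: zeta_def)

lemma zeta_0: "zeta a b 0 i = (if i = 0 then 1 else 0)"
proof -
  have "words 0 0 = {[]}"
    by (auto simp: words_def)
  then show ?thesis
    by (simp add: zeta_eq_sum_words) (simp add: words_def wt_def)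
qed

lemma words_Suc_Cons:
  "words (Suc N) i = Cons True ` words N i \<union> Cons False ` words N (i - 1)"
proof (rule set_eqI)
  fix w show "w \<in> words (Suc N) i \<longleftrightarrow> w \<in> Cons True ` words N i \<union> Cons False ` words N (i - 1)"
    by (cases w) (auto simp: words_def)
qed

lemma words_Suc_snoc:
  "words (Suc N) i = (\<lambda>w. w @ [True]) ` words N i \<union> (\<lambda>w. w @ [False]) ` words N (i - 1)"
proof (rule set_eqI)
  fix w show "w \<in> words (Suc N) i \<longleftrightarrow>
      w \<in> (\<lambda>w. w @ [True]) ` words N i \<union> (\<lambda>w. w @ [False]) ` words N (i - 1)"
  proof (cases w rule: rev_cases)
    case (snoc u e)
    then show ?thesis
      by (cases e) (auto simp: words_def)
  qed (auto simp: words_def)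
qed

lemma sum_words_Suc:
  assumes "inj f" "inj g" "\<And>u v. f u \<noteq> g v"
    and "words (Suc N) i = f ` words N i \<union> g ` words N (i - 1)"
  shows "(\<Sum>w \<in> words (Suc N) i. h w) =
    (\<Sum>w \<in> words N i. h (f w)) + (\<Sum>w \<in> words N (i - 1). h (g w))"
proof -
  have "f ` words N i \<inter> g ` words N (i - 1) = {}"
    using assms(3) by blast
  then show ?thesis
    unfolding assms(4)
    by (simp add: sum.union_disjoint finite_words
        sum.reindex[OF inj_on_subset[OF assms(1) subset_UNIV]]
        sum.reindex[OF inj_on_subset[OF assms(2) subset_UNIV]])
qed

lemma wt_aux_Suc_Suc: "wt_aux a b (Suc t) (Suc j) w = wt_aux a (\<lambda>i. b (Suc i)) t j w"
  by (induction w arbitrary: t j) auto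

\<comment> \<open>\<open>a\<close> is indexed by \<open>t - j\<close>, which must not be truncated.\<close>
lemma wt_aux_Suc: "j \<le> t \<Longrightarrow> wt_aux a b (Suc t) j w = wt_aux (\<lambda>i. a (Suc i)) b t j w"
  by (induction w arbitrary: t j) (auto simp: Suc_diff_le)

lemma wt_Cons:
  "wt a b (e # w) = (if e then b 0 * wt (\<lambda>i. a (Suc i)) b w else a 1 * wt a (\<lambda>i. b (Suc i)) w)"
  by (simp add: wt_def wt_aux_Suc wt_aux_Suc_Suc)

lemma wt_aux_snoc:
  "wt_aux a b t j (w @ [e]) = wt_aux a b t j w *
    (if e then b (j + length (filter Not w)) else a (t + length w - (j + length (filter Not w))))"
  by (induction w arbitrary: t j) auto

lemma wt_snoc:
  "wt a b (w @ [e]) = wt a b w *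
    (if e then b (length (filter Not w)) else a (Suc (length w) - length (filter Not w)))"
  by (simp add: wt_def wt_aux_snoc)

lemma zeta_Suc_first:
  "zeta a b (Suc N) i = b 0 * zeta (\<lambda>j. a (Suc j)) b N i + a 1 * zeta a (\<lambda>j. b (Suc j)) N (i - 1)"
  unfolding zeta_eq_sum_words
  by (subst sum_words_Suc[OF _ _ _ words_Suc_Cons]) (simp_all add: wt_Cons sum_distrib_left)

lemma zeta_Suc_last:
  "zeta a b (Suc N) (int k) = b k * zeta a b N (int k) + a (N + 2 - k) * zeta a b N (int k - 1)"
proof -
  have "(\<Sum>w \<in> words N (int k - 1). wt a b (w @ [False])) =
      (\<Sum>w \<in> words N (int k - 1). a (N + 2 - k) * wt a b w)"
  proof (rule sum.cong)
    fix w assume "w \<in> words N (int k - 1)"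
    then have "Suc (length w) - length (filter Not w) = N + 2 - k"
      by (auto simp: words_def)
    then show "wt a b (w @ [False]) = a (N + 2 - k) * wt a b w"
      by (simp add: wt_snoc)
  qed simp
  moreover have "(\<Sum>w \<in> words N (int k). wt a b (w @ [True])) =
      (\<Sum>w \<in> words N (int k). b k * wt a b w)"
    by (rule sum.cong) (auto simp: words_def wt_snoc)
  ultimately show ?thesis
    unfolding zeta_eq_sum_words
    by (subst sum_words_Suc[OF _ _ _ words_Suc_snoc]) (simp_all add: inj_on_def sum_distrib_left)
qed

lemma eulerian_eq_0: "i < 0 \<or> i > int n \<Longrightarrow> eulerian n i = 0"
  by (cases n) auto

lemma eulerian_Suc_int:
  "int (eulerian (Suc n) i) = (i + 1) * int (eulerian n i) + (int n + 1 - i) * int (eulerian n (i - 1))"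
proof (cases "i < 0 \<or> i > int (Suc n)")
  case True
  then show ?thesis
    using eulerian_eq_0[of i n] eulerian_eq_0[of "i - 1" n] by auto
qed (simp add: algebra_simps)

lemma assoc_eulerian_0: "assoc_eulerian \<nu> \<mu> 0 i = (if i = 0 then 1 else 0)"
  by (simp add: assoc_eulerian_def zeta_0)

lemma assoc_eulerian_Suc_int:
  assumes "\<mu> \<le> \<nu>"
  shows "int (assoc_eulerian \<nu> \<mu> (Suc N) i) =
    (int \<mu> + i + 1) * int (assoc_eulerian \<nu> \<mu> N i) +
    (int \<nu> - int \<mu> + int N + 1 - i) * int (assoc_eulerian \<nu> \<mu> N (i - 1))"
proof (cases "i < 0")
  case True
  then show ?thesis
    by (simp add: assoc_eulerian_def zeta_eq_0)
next
  case False
  then obtain k where i: "i = int k"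
    by (metis nonneg_int_cases not_less)
  show ?thesis
  proof (cases "k \<le> Suc N")
    case True
    have "int (assoc_eulerian \<nu> \<mu> (Suc N) i) =
        int (\<mu> + k + 1) * int (assoc_eulerian \<nu> \<mu> N i) +
        int (\<nu> - \<mu> + (N + 2 - k) - 1) * int (assoc_eulerian \<nu> \<mu> N (i - 1))"
      unfolding i assoc_eulerian_def zeta_Suc_last by (simp only: of_nat_add of_nat_mult)
    moreover have "int (\<nu> - \<mu> + (N + 2 - k) - 1) = int \<nu> - int \<mu> + int N + 1 - i"
      using assms True i by simp
    ultimately show ?thesis
      using i by (simp add: algebra_simps)
  next
    case False
    then show ?thesis
      by (simp add: i assoc_eulerian_def zeta_eq_0)
  qed
qed

lemma eulerian_add_eq_sum:
  "eulerian (\<nu> + N) i = (\<Sum>k = 0..\<nu>. eulerian \<nu> (int k) * assoc_eulerian \<nu> k N (i - int k))"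
proof -
  have "int (eulerian (\<nu> + N) i) =
      (\<Sum>k = 0..\<nu>. int (eulerian \<nu> (int k)) * int (assoc_eulerian \<nu> k N (i - int k)))"
  proof (induction N arbitrary: i)
    case 0
    show ?case
    proof (cases "0 \<le> i \<and> i \<le> int \<nu>")
      case True
      then obtain m where m: "i = int m" "m \<le> \<nu>"
        by (metis nonneg_int_cases of_nat_le_iff)
      have "(\<Sum>k = 0..\<nu>. int (eulerian \<nu> (int k)) * int (assoc_eulerian \<nu> k 0 (i - int k))) =
          (\<Sum>k = 0..\<nu>. if k = m then int (eulerian \<nu> (int k)) else 0)"
        by (rule sum.cong) (auto simp: assoc_eulerian_0 m)
      then show ?thesis
        using m by simp
    next
      case False
      then show ?thesis
        by (auto simp: assoc_eulerian_0 eulerian_eq_0 intro!: sum.neutral)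
    qed
  next
    case (Suc N)
    \<comment> \<open>At index \<open>i - k\<close>, the recurrence of rank \<open>(\<nu>, k)\<close> has the coefficients
      \<open>i + 1\<close> and \<open>\<nu> + N + 1 - i\<close> of the Euler recurrence, independently of \<open>k\<close>.\<close>
    have step: "int (assoc_eulerian \<nu> k (Suc N) (i - int k)) =
        (i + 1) * int (assoc_eulerian \<nu> k N (i - int k)) +
        (int (\<nu> + N) + 1 - i) * int (assoc_eulerian \<nu> k N (i - 1 - int k))" if "k \<le> \<nu>" for k
      using assoc_eulerian_Suc_int[OF that, of N "i - int k"] by (simp add: algebra_simps)
    have "int (eulerian (\<nu> + Suc N) i) =
        (i + 1) * int (eulerian (\<nu> + N) i) + (int (\<nu> + N) + 1 - i) * int (eulerian (\<nu> + N) (i - 1))"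
      using eulerian_Suc_int[of "\<nu> + N" i] by simp
    also have "\<dots> = (\<Sum>k = 0..\<nu>.
        (i + 1) * (int (eulerian \<nu> (int k)) * int (assoc_eulerian \<nu> k N (i - int k))) +
        (int (\<nu> + N) + 1 - i) * (int (eulerian \<nu> (int k)) * int (assoc_eulerian \<nu> k N (i - 1 - int k))))"
      unfolding Suc.IH sum.distrib sum_distrib_left ..
    also have "\<dots> = (\<Sum>k = 0..\<nu>. int (eulerian \<nu> (int k)) * int (assoc_eulerian \<nu> k (Suc N) (i - int k)))"
      by (rule sum.cong) (simp_all add: step algebra_simps)
    finally show ?case .
  qed
  then show ?thesis
    by (simp only: of_nat_mult[symmetric] of_nat_sum[symmetric] of_nat_eq_iff)
qed

lemma zeta_first_zero:
  "zeta a b N (int k + 1) =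
    (\<Sum>r<N. b 0 ^ r * a (Suc r) * zeta (\<lambda>j. a (j + r)) (\<lambda>j. b (Suc j)) (N - Suc r) (int k))"
proof (induction N arbitrary: a)
  case 0
  then show ?case
    by (simp add: zeta_0)
next
  case (Suc N)
  show ?case
    unfolding zeta_Suc_first[of a b N] Suc.IH sum.lessThan_Suc_shift
    by (simp add: sum_distrib_left algebra_simps)
qed

lemma assoc_eulerian_1_0_Suc:
  "assoc_eulerian 1 0 N (int k + 1) = (\<Sum>j = 1..N. j * assoc_eulerian (j + 1) 1 (N - j) (int k))"
proof -
  have "assoc_eulerian 1 0 N (int k + 1) =
      (\<Sum>r<N. Suc r * assoc_eulerian (Suc r + 1) 1 (N - Suc r) (int k))"
    unfolding assoc_eulerian_def zeta_first_zero by (simp add: add.commute)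
  also have "\<dots> = (\<Sum>j = 1..N. j * assoc_eulerian (j + 1) 1 (N - j) (int k))"
    by (simp add: sum.atLeast1_atMost_eq)
  finally show ?thesis .
qed

lemma eulerian_eq_assoc_eulerian_1_0:
  assumes "1 \<le> n"
  shows "eulerian n i = assoc_eulerian 1 0 (n - 1) i"
  using eulerian_add_eq_sum[of 1 "n - 1" i] assms by (simp add: numeral_2_eq_2)

lemma eulerian_eq_weighted_sum_assoc_eulerian:
  assumes "1 \<le> m" "m \<le> n"
  shows "eulerian n (int m) =
    (\<Sum>j = 1..n - m. j * assoc_eulerian (j + 1) 1 (n - j - 1) (int m - 1))"
proof -
  obtain k where k: "m = Suc k"
    using assms(1) by (cases m) auto
  have "eulerian n (int m) = assoc_eulerian 1 0 (n - 1) (int k + 1)"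
    using assms k eulerian_eq_assoc_eulerian_1_0[of n "int m"] by (simp add: add.commute)
  also have "\<dots> = (\<Sum>j = 1..n - 1. j * assoc_eulerian (j + 1) 1 (n - j - 1) (int k))"
    unfolding assoc_eulerian_1_0_Suc diff_commute[of n 1] ..
  also have "\<dots> = (\<Sum>j = 1..n - m. j * assoc_eulerian (j + 1) 1 (n - j - 1) (int k))"
  proof (rule sum.mono_neutral_right)
    show "\<forall>j \<in> {1..n - 1} - {1..n - m}. j * assoc_eulerian (j + 1) 1 (n - j - 1) (int k) = 0"
      using k by (auto simp: assoc_eulerian_def zeta_eq_0)
  qed (use assms(1) in auto)
  finally show ?thesis
    using k by simp
qed

theorem theorem6p4:
  shows "(\<forall>n m :: nat. 1 \<le> m \<and> m \<le> n \<longrightarrow>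
           eulerian n (int m) =
             (\<Sum>j = 1..n - m. j * assoc_eulerian (j + 1) 1 (n - j - 1) (int m - 1))) \<and>
         (\<forall>n m \<nu> :: nat. m \<le> n \<and> 1 \<le> \<nu> \<and> \<nu> \<le> n - 1 \<longrightarrow>
           eulerian n (int m) =
             (\<Sum>k = 0..\<nu>. eulerian \<nu> (int k) * assoc_eulerian \<nu> k (n - \<nu>) (int m - int k)))"
proof (intro conjI allI impI)
  fix n m :: nat
  assume "1 \<le> m \<and> m \<le> n"
  then show "eulerian n (int m) =
      (\<Sum>j = 1..n - m. j * assoc_eulerian (j + 1) 1 (n - j - 1) (int m - 1))"
    using eulerian_eq_weighted_sum_assoc_eulerian by blast
next
  fix n m \<nu> :: nat
  assume "m \<le> n \<and> 1 \<le> \<nu> \<and> \<nu> \<le> n - 1"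
  then have "n = \<nu> + (n - \<nu>)"
    by auto
  then show "eulerian n (int m) =
      (\<Sum>k = 0..\<nu>. eulerian \<nu> (int k) * assoc_eulerian \<nu> k (n - \<nu>) (int m - int k))"
    by (metis eulerian_add_eq_sum)
qed

end
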